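(* Let $\beta>0$, let $\mathbf{s}=(\mathbf{s}_{\mathrm{sys}},\mathbf{s}_{\mathrm{env}})$ with $\mathbf{s}_{\mathrm{sys}}=(\mathbf{s}_1,\dots,\mathbf{s}_K)$, and let $\mathbf{x}=(\mathbf{x}_1,\dots,\mathbf{x}_K)$ where $\mathbf{x}_i$ and $\mathbf{s}_i$ live in the same Euclidean space. Let $p_1,\dots,p_K$ be prior densities and $U_{\mathrm{env}}$ an environment energy. Suppose the interaction energy is quadratic in $\mathbf{s}_{\mathrm{sys}}$ given $\mathbf{s}_{\mathrm{env}}$: $$\exp(-\beta U_{\mathrm{int}}(\mathbf{s}_{\mathrm{sys}},\mathbf{s}_{\mathrm{env}}))\propto\mathcal{N}(\mathbf{s}_{\mathrm{sys}}\mid\boldsymbol{\mu}_c(\mathbf{s}_{\mathrm{env}}),\boldsymbol{\Sigma}_c(\mathbf{s}_{\mathrm{env}})).$$ Assume the forward kernels at diffusion time $t>0$ satisfy $$\prod_{i=1}^K q_t^{(i)}(\mathbf{s}_i\mid\mathbf{x}_i)=\mathcal{N}(\mathbf{s}_{\mathrm{sys}}\mid\mathbf{A}_t\mathbf{x},\boldsymbol{\Sigma}_t)$$ with $\mathbf{A}_t$ square and invertible, and let the finite-$t$ context schedule be $$q_{\mathrm{ctx}}(\mathbf{s},t)\propto\exp(-\beta U_{\mathrm{env}}(\mathbf{s}_{\mathrm{env}}))\,q_{\mathrm{int}}(\mathbf{s}_{\mathrm{sys}}\mid\mathbf{s}_{\mathrm{env}},t),\qquad q_{\mathrm{int}}(\mathbf{s}_{\mathrm{sys}}\mid\mathbf{s}_{\mathrm{env}},t)=\mathcal{N}(\mathbf{s}_{\mathrm{sys}}\mid\boldsymbol{\mu}_q(\mathbf{s}_{\mathrm{env}},t),\boldsymbol{\Sigma}_q(\mathbf{s}_{\mathrm{env}},t)).$$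 Define $$\pi_t(\mathbf{x},\mathbf{s}_{\mathrm{env}})\propto\int q_{\mathrm{ctx}}(\mathbf{s},t)\prod_{i=1}^K p_i(\mathbf{x}_i)\,q_t^{(i)}(\mathbf{s}_i\mid\mathbf{x}_i)\,d\mathbf{s}_{\mathrm{sys}},\qquad \pi_0(\mathbf{x},\mathbf{s}_{\mathrm{env}})\propto\exp(-\beta U_{\mathrm{env}}(\mathbf{s}_{\mathrm{env}}))\Big(\prod_{i=1}^K p_i(\mathbf{x}_i)\Big)\exp(-\beta U_{\mathrm{int}}(\mathbf{x},\mathbf{s}_{\mathrm{env}})).$$ Then $\pi_t(\mathbf{x},\mathbf{s}_{\mathrm{env}})\propto\pi_0(\mathbf{x},\mathbf{s}_{\mathrm{env}})$ if and only if $$\boldsymbol{\mu}_q(\mathbf{s}_{\mathrm{env}},t)=\mathbf{A}_t\boldsymbol{\mu}_c(\mathbf{s}_{\mathrm{env}}),\qquad \boldsymbol{\Sigma}_q(\mathbf{s}_{\mathrm{env}},t)=\mathbf{A}_t\boldsymbol{\Sigma}_c(\mathbf{s}_{\mathrm{env}})\mathbf{A}_t^\top-\boldsymbol{\Sigma}_t.$$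
   Context: $\mathcal{N}(\mathbf{z}\mid\boldsymbol{\mu},\boldsymbol{\Sigma})$ denotes the multivariate Gaussian density in $\mathbf{z}$ with mean $\boldsymbol{\mu}$ and (symmetric positive-definite) covariance $\boldsymbol{\Sigma}$. Here $\mathbf{s}_{\mathrm{sys}}$ collects the system coordinates coupled to the priors through the projections $\Phi_i(\mathbf{s})=\mathbf{s}_i$, and $q_t^{(i)}$ is the forward diffusion kernel of prior $i$. The proportionality $\pi_t(\mathbf{x},\mathbf{s}_{\mathrm{env}})\propto\pi_0(\mathbf{x},\mathbf{s}_{\mathrm{env}})$ is understood as proportionality in $\mathbf{x}$ with a constant that may depend on $\mathbf{s}_{\mathrm{env}}$ and $t$ but not on $\mathbf{x}$. *)

theory Defs
  imports "HOL-Analysis.Analysis"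
begin

definition spd :: "real^'n^'n \<Rightarrow> bool" where
  "spd S \<longleftrightarrow> transpose S = S \<and> (\<forall>v. v \<noteq> 0 \<longrightarrow> v \<bullet> (S *v v) > 0)"

definition gauss :: "real^'n \<Rightarrow> real^'n^'n \<Rightarrow> real^'n \<Rightarrow> real" where
  "gauss mu S z =
     exp (- (1/2) * ((z - mu) \<bullet> (matrix_inv S *v (z - mu))))
     / sqrt ((2 * pi) ^ CARD('n) * det S)"

text \<open>x (or s) depends only on the coordinates of block i.\<close>
definition same_block :: "('d \<Rightarrow> 'k) \<Rightarrow> 'k \<Rightarrow> real^'d \<Rightarrow> real^'d \<Rightarrow> bool" where
  "same_block blk i x y \<longleftrightarrow> (\<forall>j. blk j = i \<longrightarrow> x $ j = y $ j)"

end

theory Submission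
  imports Defs "HOL-Probability.Probability"
begin

(* Integrating out s_sys convolves the Gaussian context factor N(mu_q, Sigma_q) with the
   Gaussian kernel N(A x, Sigma_t), so pi_t(x) is a positive constant times prod_i p_i(x_i)
   times exp(-1/2 (A x - mu_q)' (Sigma_q + Sigma_t)^-1 (A x - mu_q)), while pi_0(x) is a
   positive constant times prod_i p_i(x_i) times exp(-1/2 (x - mu_c)' Sigma_c^-1 (x - mu_c)).
   The positive prior factors cancel, so proportionality means that the two exponents differ
   by a constant. Two quadratic forms with invertible symmetric matrices differ by a constant
   only if their centres and matrices agree, and after substituting x = A^-1 y this gives
   mu_q = A mu_c and Sigma_q + Sigma_t = A Sigma_c A'. *)

lemma proportional_exp_iff:
  fixes f g w :: "'x \<Rightarrow> real"
  assumes a: "a > 0" and b: "b > 0" and w: "\<And>x. w x > 0"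
  shows "(\<exists>c>0. \<forall>x. a * w x * exp (-(1/2) * f x) = c * (b * w x * exp (-(1/2) * g x)))
         \<longleftrightarrow> (\<exists>k. \<forall>x. f x = g x + k)"
proof
  assume "\<exists>c>0. \<forall>x. a * w x * exp (-(1/2) * f x) = c * (b * w x * exp (-(1/2) * g x))"
  then obtain c where c: "c > 0"
    and scaled: "\<And>x. a * w x * exp (-(1/2) * f x) = c * (b * w x * exp (-(1/2) * g x))"
    by blast
  have "f x = g x + (- 2 * ln (c * b / a))" for x
  proof -
    have "exp (-(1/2) * f x) = (c * b / a) * exp (-(1/2) * g x)"
      using scaled[of x] w[of x] a by (simp add: field_simps)
    also have "\<dots> = exp (ln (c * b / a)) * exp (-(1/2) * g x)"
      using a b c by simp
    also have "\<dots> = exp (ln (c * b / a) + -(1/2) * g x)"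
      by (rule exp_add[symmetric])
    finally show ?thesis by simp
  qed
  then show "\<exists>k. \<forall>x. f x = g x + k" by blast
next
  assume "\<exists>k. \<forall>x. f x = g x + k"
  then obtain k where k: "\<And>x. f x = g x + k" by blast
  have "a * w x * exp (-(1/2) * f x) =
        (a * exp (-(1/2) * k) / b) * (b * w x * exp (-(1/2) * g x))" for x
  proof -
    have "exp (-(1/2) * f x) = exp (-(1/2) * k) * exp (-(1/2) * g x)"
      by (simp add: k algebra_simps flip: exp_add)
    then show ?thesis using b by simp
  qed
  moreover have "a * exp (-(1/2) * k) / b > 0" using a b by simp
  ultimately show "\<exists>c>0. \<forall>x. a * w x * exp (-(1/2) * f x) = c * (b * w x * exp (-(1/2) * g x))"
    by blast
qed

subsection \<open>Matrix algebra\<close>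

lemma matrix_add_rdistrib:
  fixes A B :: "'a::semiring_1^'n^'m" and C :: "'a^'p^'n"
  shows "(A + B) ** C = A ** C + B ** C"
  by (simp add: matrix_matrix_mult_def vec_eq_iff sum.distrib distrib_right)

lemma matrix_diff_rdistrib:
  fixes A B :: "'a::ring_1^'n^'m" and C :: "'a^'p^'n"
  shows "(A - B) ** C = A ** C - B ** C"
  by (simp add: matrix_matrix_mult_def vec_eq_iff sum_subtractf left_diff_distrib)

lemma transpose_add: "transpose (A + B) = transpose A + transpose B"
  by (simp add: transpose_def vec_eq_iff)

lemma matrix_inv_cancel:
  fixes S :: "'a::semiring_1^'n^'m"
  assumes "invertible S"
  shows matrix_inv_right: "S ** matrix_inv S = mat 1"
    and matrix_inv_left: "matrix_inv S ** S = mat 1"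
proof -
  have "\<exists>S'. S ** S' = mat 1 \<and> S' ** S = mat 1" using assms by (simp add: invertible_def)
  then have "S ** matrix_inv S = mat 1 \<and> matrix_inv S ** S = mat 1"
    unfolding matrix_inv_def by (rule someI_ex)
  then show "S ** matrix_inv S = mat 1" "matrix_inv S ** S = mat 1" by auto
qed

lemma matrix_inv_unique:
  fixes S X :: "'a::field^'n^'n"
  assumes "X ** S = mat 1"
  shows "matrix_inv S = X"
proof -
  have "invertible S" using assms invertible_left_inverse by blast
  then show ?thesis
    by (metis assms matrix_inv_right matrix_mul_assoc matrix_mul_lid matrix_mul_rid)
qed

lemma transpose_matrix_inv:
  fixes S :: "'a::field^'n^'n"
  assumes "invertible S"
  shows "transpose (matrix_inv S) = matrix_inv (transpose S)"
  by (metis assms matrix_inv_right matrix_inv_unique matrix_transpose_mul transpose_mat)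

lemma matrix_inv_add:
  fixes S R :: "'a::field^'n^'n"
  assumes S: "invertible S" and R: "invertible R"
    and SR: "invertible (matrix_inv S + matrix_inv R)"
  shows "matrix_inv (S + R) = matrix_inv R -
           matrix_inv R ** matrix_inv (matrix_inv S + matrix_inv R) ** matrix_inv R"
proof (rule matrix_inv_unique)
  define T where "T = matrix_inv R"
  define P where "P = matrix_inv (matrix_inv S + T)"
  have "T ** P ** T ** S + T ** P = T ** P ** (T ** S + mat 1)"
    by (simp add: matrix_add_ldistrib matrix_mul_assoc)
  also have "T ** S + mat 1 = (matrix_inv S + T) ** S"
    using S by (simp add: matrix_add_rdistrib matrix_inv_left add.commute)
  also have "T ** P ** ((matrix_inv S + T) ** S) = T ** S"
    using SR by (metis P_def T_def matrix_inv_left matrix_mul_assoc matrix_mul_lid)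
  finally have "T ** P ** T ** S + T ** P = T ** S" .
  moreover have "T ** R = mat 1" using R by (simp add: T_def matrix_inv_left)
  ultimately have "T ** S + T ** R - (T ** P ** T ** S + T ** P ** (T ** R)) = mat 1"
    by simp
  then show "(T - T ** P ** T) ** (S + R) = mat 1"
    by (simp add: matrix_diff_rdistrib matrix_add_ldistrib matrix_mul_assoc algebra_simps)
qed

subsection \<open>Quadratic forms\<close>

abbreviation quad_form :: "real^'n^'n \<Rightarrow> real^'n \<Rightarrow> real" where
  "quad_form S v \<equiv> v \<bullet> (S *v v)"

lemma inner_matrix_vector_symmetric:
  fixes S :: "real^'n^'n"
  assumes "transpose S = S"
  shows "x \<bullet> (S *v y) = y \<bullet> (S *v x)"
  by (metis assms dot_lmul_matrix inner_commute transpose_matrix_vector)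

lemma quad_form_add:
  fixes S :: "real^'n^'n"
  assumes "transpose S = S"
  shows "quad_form S (v + w) = quad_form S v + 2 * (v \<bullet> (S *v w)) + quad_form S w"
  using inner_matrix_vector_symmetric[OF assms, of w v]
  by (simp add: matrix_vector_right_distrib inner_add_left inner_add_right)

lemma quad_form_diff:
  fixes S :: "real^'n^'n"
  assumes "transpose S = S"
  shows "quad_form S (v - w) = quad_form S v - 2 * (v \<bullet> (S *v w)) + quad_form S w"
  using inner_matrix_vector_symmetric[OF assms, of w v]
  by (simp add: matrix_vector_mult_diff_distrib inner_diff_left inner_diff_right)

lemma quad_form_matrix_vector_mult:
  fixes M A :: "real^'n^'n"
  shows "quad_form M (A *v w) = quad_form (transpose A ** M ** A) w"
proof -
  have "quad_form (transpose A ** M ** A) w = w \<bullet> (transpose A *v (M *v (A *v w)))"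
    by (simp only: matrix_vector_mul_assoc matrix_mul_assoc)
  also have "\<dots> = (M *v (A *v w)) \<bullet> (A *v w)"
    by (metis dot_lmul_matrix inner_commute transpose_matrix_vector)
  finally show ?thesis by (simp add: inner_commute)
qed

lemma matrix_vector_mult_uminus_right:
  fixes A :: "'a::ring_1^'n^'m"
  shows "A *v (- x) = - (A *v x)"
  by (simp add: matrix_vector_mult_def vec_eq_iff sum_negf)

lemma quad_form_eqI:
  fixes N C :: "real^'n^'n"
  assumes symN: "transpose N = N" and symC: "transpose C = C"
    and eq: "\<And>w. quad_form N w = quad_form C w"
  shows "N = C"
proof -
  have "v \<bullet> (N *v y) = v \<bullet> (C *v y)" for v y
    using quad_form_add[OF symN, of v y] quad_form_add[OF symC, of v y]
      eq[of "v + y"] eq[of v] eq[of y]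
    by simp
  then have "N *v y = C *v y" for y
    by (metis inner_diff_right inner_eq_zero_iff right_minus_eq)
  then show ?thesis by (simp add: matrix_eq)
qed

lemma quad_form_shift_eq_iff:
  fixes N C :: "real^'n^'n" and a b :: "real^'n"
  assumes symN: "transpose N = N" and symC: "transpose C = C" and C: "invertible C"
  shows "(\<exists>k. \<forall>x. quad_form N (x - a) = quad_form C (x - b) + k) \<longleftrightarrow> a = b \<and> N = C"
proof
  assume "\<exists>k. \<forall>x. quad_form N (x - a) = quad_form C (x - b) + k"
  then obtain k where k: "\<And>x. quad_form N (x - a) = quad_form C (x - b) + k" by blast
  define d where "d = a - b"
  have k': "quad_form N w = quad_form C (d + w) + k" for w
    using k[of "a + w"] by (simp add: d_def algebra_simps)
  \<comment> \<open>the left side is even in \<open>w\<close>, so the linear term of the right side vanishes\<close>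
  have "w \<bullet> (C *v d) = 0" for w
  proof -
    have "quad_form C (d + w) = quad_form C (d + - w)"
      using k'[of w] k'[of "- w"] by (simp add: matrix_vector_mult_uminus_right)
    then show ?thesis
      using quad_form_add[OF symC, of d w] quad_form_add[OF symC, of d "- w"]
        inner_matrix_vector_symmetric[OF symC, of d w]
      by (simp add: matrix_vector_mult_uminus_right)
  qed
  then have "C *v d = C *v 0" using inner_eq_zero_iff by fastforce
  then have "d = 0" using inj_matrix_vector_mult[OF C] by (rule injD[rotated])
  then have ab: "a = b" by (simp add: d_def)
  then have "quad_form N w = quad_form C w" for w
    using k'[of w] k'[of 0] by (simp add: d_def)
  then show "a = b \<and> N = C" using ab quad_form_eqI[OF symN symC] by blast
qed (use exI[of _ 0] in auto)

lemma matrix_inv_congruence_eq_iff: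
  fixes A G S :: "'a::field^'n^'n"
  assumes A: "invertible A" and G: "invertible G" and S: "invertible S"
  shows "transpose A ** matrix_inv G ** A = matrix_inv S \<longleftrightarrow> G = A ** S ** transpose A"
proof
  assume congr: "transpose A ** matrix_inv G ** A = matrix_inv S"
  have "A ** S ** transpose A ** matrix_inv G =
        A ** S ** (transpose A ** matrix_inv G ** A) ** matrix_inv A"
    using A by (simp add: matrix_mul_assoc[symmetric] matrix_inv_right)
  also have "\<dots> = mat 1"
    using A S by (metis congr matrix_inv_right matrix_mul_assoc matrix_mul_rid)
  finally have "matrix_inv (matrix_inv G) = A ** S ** transpose A"
    by (rule matrix_inv_unique)
  moreover have "matrix_inv (matrix_inv G) = G"
    using G by (simp add: matrix_inv_unique matrix_inv_right)
  ultimately show "G = A ** S ** transpose A" by simp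
next
  assume G_eq: "G = A ** S ** transpose A"
  have At: "transpose A ** transpose (matrix_inv A) = mat 1"
    using A by (metis matrix_inv_left matrix_transpose_mul transpose_mat)
  have "transpose A ** matrix_inv G ** A ** S =
        transpose A ** matrix_inv G ** A ** S ** (transpose A ** transpose (matrix_inv A))"
    by (simp add: At)
  also have "\<dots> = transpose A ** (matrix_inv G ** G) ** transpose (matrix_inv A)"
    by (simp add: G_eq matrix_mul_assoc)
  also have "\<dots> = mat 1"
    using G At by (simp add: matrix_inv_left)
  finally show "transpose A ** matrix_inv G ** A = matrix_inv S"
    by (rule matrix_inv_unique[symmetric])
qed

lemma quad_form_affine_eq_iff:
  fixes A G S :: "real^'n^'n" and \<mu> m :: "real^'n"
  assumes A: "invertible A" and symG: "transpose G = G" and G: "invertible G"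
    and symS: "transpose S = S" and S: "invertible S"
  shows "(\<exists>k. \<forall>x. quad_form (matrix_inv G) (A *v x - \<mu>) = quad_form (matrix_inv S) (x - m) + k)
         \<longleftrightarrow> \<mu> = A *v m \<and> G = A ** S ** transpose A"
proof -
  define N where "N = transpose A ** matrix_inv G ** A"
  define a where "a = matrix_inv A *v \<mu>"
  have Aa: "A *v a = \<mu>"
    using A by (simp add: a_def matrix_vector_mul_assoc matrix_inv_right)
  have shift: "quad_form (matrix_inv G) (A *v x - \<mu>) = quad_form N (x - a)" for x
    unfolding N_def quad_form_matrix_vector_mult[symmetric] Aa[symmetric]
    by (simp only: matrix_vector_mult_diff_distrib)
  have "transpose N = N"
    using symG G by (simp add: N_def matrix_transpose_mul transpose_matrix_inv matrix_mul_assoc)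
  moreover have "transpose (matrix_inv S) = matrix_inv S"
    using symS S by (simp add: transpose_matrix_inv)
  moreover have "invertible (matrix_inv S)"
    using S invertible_left_inverse matrix_inv_right by blast
  ultimately have "(\<exists>k. \<forall>x. quad_form N (x - a) = quad_form (matrix_inv S) (x - m) + k)
                   \<longleftrightarrow> a = m \<and> N = matrix_inv S"
    by (rule quad_form_shift_eq_iff)
  moreover have "a = m \<longleftrightarrow> \<mu> = A *v m"
    using Aa inj_matrix_vector_mult[OF A] by (auto dest: injD)
  ultimately show ?thesis
    using matrix_inv_congruence_eq_iff[OF A G S] by (simp add: shift N_def)
qed

lemma quad_form_complete_square:
  fixes Q T :: "real^'n^'n"
  assumes symQ: "transpose Q = Q" and symT: "transpose T = T" and inv: "invertible (Q + T)"
  shows "quad_form Q u + quad_form T (u - d) =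
         quad_form (Q + T) (u - matrix_inv (Q + T) *v (T *v d)) +
         quad_form (T - T ** matrix_inv (Q + T) ** T) d"
proof -
  define P where "P = Q + T"
  define w where "w = matrix_inv P *v (T *v d)"
  have symP: "transpose P = P" using symQ symT by (simp add: P_def transpose_add)
  have Pw: "P *v w = T *v d"
    using inv by (simp add: w_def P_def matrix_vector_mul_assoc matrix_mul_assoc matrix_inv_right)
  have "quad_form P (u - w) = quad_form P u - 2 * (u \<bullet> (T *v d)) + w \<bullet> (T *v d)"
    using quad_form_diff[OF symP, of u w] Pw inner_matrix_vector_symmetric[OF symP, of w w] by simp
  moreover have "quad_form (T - T ** matrix_inv P ** T) d = quad_form T d - w \<bullet> (T *v d)"
    using inner_matrix_vector_symmetric[OF symT, of d w]
    by (simp add: w_def matrix_vector_mult_diff_rdistrib matrix_vector_mul_assoc matrix_mul_assoc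
        inner_diff_right)
  moreover have "quad_form T (u - d) = quad_form T u - 2 * (u \<bullet> (T *v d)) + quad_form T d"
    by (rule quad_form_diff[OF symT])
  moreover have "quad_form P u = quad_form Q u + quad_form T u"
    by (simp add: P_def matrix_vector_mult_add_rdistrib inner_add_right)
  ultimately show ?thesis unfolding P_def[symmetric] w_def[symmetric] by linarith
qed

subsection \<open>Symmetric positive-definite matrices\<close>

lemma spd_symmetric: "spd S \<Longrightarrow> transpose S = S"
  by (simp add: spd_def)

lemma spd_invertible:
  fixes S :: "real^'n^'n"
  assumes "spd S"
  shows "invertible S"
proof -
  have "inj ((*v) S)"
  proof (rule injI)
    fix x y assume "S *v x = S *v y"
    then have "quad_form S (x - y) = 0" by (simp add: matrix_vector_mult_diff_distrib)
    then show "x = y" using assms unfolding spd_def by (metis less_irrefl eq_iff_diff_eq_0)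
  qed
  then show ?thesis using matrix_left_invertible_injective invertible_left_inverse by blast
qed

lemma spd_matrix_inv:
  fixes S :: "real^'n^'n"
  assumes S: "spd S"
  shows "spd (matrix_inv S)"
  unfolding spd_def
proof (intro conjI allI impI)
  have iS: "invertible S" using S spd_invertible by blast
  then show "transpose (matrix_inv S) = matrix_inv S"
    using S by (simp add: transpose_matrix_inv spd_symmetric)
  fix v :: "real^'n" assume v: "v \<noteq> 0"
  define w where "w = matrix_inv S *v v"
  have Sw: "S *v w = v" using iS by (simp add: w_def matrix_vector_mul_assoc matrix_inv_right)
  then have "w \<noteq> 0" using v by auto
  then have "quad_form S w > 0" using S unfolding spd_def by auto
  then show "v \<bullet> (matrix_inv S *v v) > 0"
    using Sw by (simp add: w_def inner_commute)
qed

lemma spd_add: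
  fixes S T :: "real^'n^'n"
  assumes "spd S" "spd T"
  shows "spd (S + T)"
  using assms unfolding spd_def
  by (auto simp: matrix_vector_mult_add_rdistrib inner_add_right transpose_add add_pos_pos)

lemma spd_det_pos:
  fixes S :: "real^'n^'n"
  assumes S: "spd S"
  shows "det S > 0"
proof (rule ccontr)
  assume "\<not> det S > 0"
  \<comment> \<open>every matrix on the segment from \<open>mat 1\<close> to \<open>S\<close> is positive definite,
    so \<open>det\<close> has no zero there\<close>
  define S' where "S' = (\<lambda>l::real. (1 - l) *\<^sub>R mat 1 + l *\<^sub>R S)"
  have "continuous_on {0..1} (\<lambda>l. det (S' l))"
    unfolding S'_def det_def by (intro continuous_intros)
  moreover have "det (S' 1) \<le> 0" "0 \<le> det (S' 0)"
    using \<open>\<not> det S > 0\<close> by (auto simp: S'_def)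
  ultimately obtain l where l: "0 \<le> l" "l \<le> 1" "det (S' l) = 0"
    using IVT2'[of "\<lambda>l. det (S' l)" 1 0 0] by auto
  have "spd (S' l)"
    unfolding spd_def
  proof (intro conjI allI impI)
    show "transpose (S' l) = S' l"
      using S unfolding spd_def S'_def by (auto simp: transpose_def vec_eq_iff mat_def)
    fix v :: "real^'n" assume v: "v \<noteq> 0"
    have "v \<bullet> (S' l *v v) = (1 - l) * (v \<bullet> v) + l * quad_form S v"
      by (simp add: S'_def matrix_vector_mult_add_rdistrib inner_add_right
          scaleR_matrix_vector_assoc[symmetric])
    moreover have "quad_form S v > 0" using S v spd_def by blast
    moreover have "v \<bullet> v > 0" using v by simp
    ultimately show "0 < v \<bullet> (S' l *v v)"
      using l by (smt (verit) mult_nonneg_nonneg mult_pos_pos)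
  qed
  then show False using l spd_invertible invertible_det_nz by blast
qed

lemma spd_quad_form_lower_bound:
  fixes P :: "real^'n^'n"
  assumes "spd P"
  obtains l where "l > 0" "\<And>u. l * (u \<bullet> u) \<le> quad_form P u"
proof -
  have "continuous_on (sphere 0 1) (\<lambda>u::real^'n. quad_form P u)"
    by (intro continuous_intros)
  moreover have "sphere (0::real^'n) 1 \<noteq> {}"
    by (metis empty_iff norm_Basis SOME_Basis mem_sphere_0)
  ultimately obtain u0 where u0: "u0 \<in> sphere 0 1"
    and min: "\<And>v. v \<in> sphere 0 1 \<Longrightarrow> quad_form P u0 \<le> quad_form P v"
    using continuous_attains_inf[OF compact_sphere] by blast
  have "quad_form P u0 * (u \<bullet> u) \<le> quad_form P u" for u
  proof (cases "u = 0")
    case False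
    define v where "v = (1 / norm u) *\<^sub>R u"
    have "v \<in> sphere 0 1" using False by (simp add: v_def)
    moreover have "quad_form P u = (norm u)^2 * quad_form P v"
      using False by (simp add: v_def matrix_vector_mult_scaleR power2_eq_square)
    ultimately show ?thesis
      using mult_right_mono[OF min zero_le_power2[of "norm u"]]
      by (simp add: power2_norm_eq_inner[symmetric] mult.commute)
  qed simp
  moreover have "quad_form P u0 > 0"
    using assms u0 unfolding spd_def by (metis mem_sphere_0 norm_zero zero_neq_one)
  ultimately show ?thesis using that by blast
qed

subsection \<open>Gaussian integrals\<close>

lemma integrable_prod_Basis:
  fixes g :: "real \<Rightarrow> real"
  assumes g: "integrable lborel g" and nn: "\<And>t. 0 \<le> g t"
  shows "integrable lborel (\<lambda>x::'a::euclidean_space. \<Prod>b\<in>Basis. g (x \<bullet> b))"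
proof -
  have gm[measurable]: "g \<in> borel_measurable borel"
    using g by (simp add: borel_measurable_integrable)
  have fin: "(\<integral>\<^sup>+x. ennreal (g x) \<partial>lborel) < \<infinity>"
    using g nn by (simp add: integrable_iff_bounded)
  have "(\<integral>\<^sup>+x. ennreal (norm (\<Prod>b\<in>Basis. g ((x::'a) \<bullet> b))) \<partial>lborel)
       = (\<integral>\<^sup>+x. (\<Prod>b\<in>(Basis::'a set). ennreal (g ((x::'a) \<bullet> b))) \<partial>lborel)"
    by (auto intro!: nn_integral_cong simp: prod_nonneg nn prod_ennreal abs_prod)
  also have "\<dots> = (\<Prod>b\<in>(Basis::'a set). (\<integral>\<^sup>+x. ennreal (g x) \<partial>lborel))"
    by (rule nn_integral_lborel_prod) auto
  also have "\<dots> < \<infinity>"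
    using fin by (simp add: less_top[symmetric] ennreal_prod_eq_top power_eq_top_ennreal)
  finally show ?thesis
    unfolding integrable_iff_bounded by simp
qed

lemma integrable_exp_neg_sq:
  fixes a :: real assumes a: "a > 0"
  shows "integrable lborel (\<lambda>t::real. exp (- a * t^2))"
proof -
  define \<sigma> where "\<sigma> = sqrt (1 / (2 * a))"
  have s2: "\<sigma>^2 = 1 / (2 * a)" using a by (simp add: \<sigma>_def)
  have spos: "\<sigma> > 0" using a by (simp add: \<sigma>_def)
  have "(\<lambda>t. exp (- a * t^2)) = (\<lambda>t. sqrt (2 * pi * \<sigma>^2) * normal_density 0 \<sigma> t)"
  proof
    fix t :: real
    have nz: "sqrt (2 * pi * \<sigma>^2) \<noteq> 0" using spos by simp
    have "sqrt (2 * pi * \<sigma>^2) * normal_density 0 \<sigma> t = exp (- ((t - 0)^2) / (2 * \<sigma>^2))"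
      unfolding normal_density_def using nz by simp
    also have "- ((t - 0)^2) / (2 * \<sigma>^2) = - a * t^2" using a by (simp add: s2)
    finally show "exp (- a * t^2) = sqrt (2 * pi * \<sigma>^2) * normal_density 0 \<sigma> t" by simp
  qed
  moreover have "integrable lborel (\<lambda>t. sqrt (2 * pi * \<sigma>^2) * normal_density 0 \<sigma> t)"
    using spos by (intro integrable_mult_right) auto
  ultimately show ?thesis by (simp only:)
qed

lemma integrable_exp_neg_inner:
  fixes a :: real assumes a: "a > 0"
  shows "integrable lborel (\<lambda>u::'a::euclidean_space. exp (- a * (u \<bullet> u)))"
proof -
  have e: "u \<bullet> u = (\<Sum>b\<in>Basis. (u \<bullet> b)^2)" for u :: 'a
    by (subst euclidean_inner) (simp add: power2_eq_square)
  have "(\<lambda>u::'a. exp (- a * (u \<bullet> u))) = (\<lambda>u. \<Prod>b\<in>Basis. exp (- a * (u \<bullet> b)^2))"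
  proof
    fix u :: 'a
    have "exp (- a * (u \<bullet> u)) = exp (\<Sum>b\<in>Basis. - a * (u \<bullet> b)^2)"
      by (simp only: e sum_distrib_left[symmetric])
    also have "\<dots> = (\<Prod>b\<in>Basis. exp (- a * (u \<bullet> b)^2))"
      by (rule exp_sum) simp
    finally show "exp (- a * (u \<bullet> u)) = (\<Prod>b\<in>Basis. exp (- a * (u \<bullet> b)^2))" .
  qed
  then show ?thesis
    using integrable_prod_Basis[OF integrable_exp_neg_sq[OF a]] by simp
qed

lemma lborel_integral_translate:
  fixes f :: "'a::euclidean_space \<Rightarrow> real" and m :: 'a
  assumes [measurable]: "f \<in> borel_measurable borel"
  shows "(\<integral>s. f (s - m) \<partial>lborel) = (\<integral>s. f s \<partial>lborel)"
proof -
  have "(\<integral>s. f (s - m) \<partial>distr lborel borel ((+) m)) = (\<integral>s. f s \<partial>lborel)"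
    by (subst integral_distr) auto
  then show ?thesis by (simp add: lborel_distr_plus)
qed

lemma borel_measurable_exp_quad_form [measurable]:
  "(\<lambda>u. exp (-(1/2) * quad_form P u)) \<in> borel_measurable borel"
  by (intro borel_measurable_continuous_onI continuous_intros)

lemma integrable_exp_quad_form:
  fixes P :: "real^'n^'n"
  assumes "spd P"
  shows "integrable lborel (\<lambda>u. exp (-(1/2) * quad_form P u))"
proof -
  obtain l where l: "l > 0" "\<And>u. l * (u \<bullet> u) \<le> quad_form P u"
    using spd_quad_form_lower_bound[OF assms] by blast
  show ?thesis
  proof (rule Bochner_Integration.integrable_bound[OF integrable_exp_neg_inner[of "l / 2"]])
    show "(\<lambda>u. exp (-(1/2) * quad_form P u)) \<in> borel_measurable lborel"
      by (simp only: measurable_lborel2 borel_measurable_exp_quad_form)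
    show "AE u in lborel. norm (exp (-(1/2) * quad_form P u)) \<le> norm (exp (- (l / 2) * (u \<bullet> u)))"
      using l(2) by auto
  qed (use l in auto)
qed

lemma integral_exp_quad_form_pos:
  fixes P :: "real^'n^'n"
  assumes "spd P"
  shows "(\<integral>u. exp (-(1/2) * quad_form P u) \<partial>lborel) > 0"
proof -
  have "(\<integral>u. exp (-(1/2) * quad_form P u) \<partial>lborel) \<noteq> 0"
  proof
    assume "(\<integral>u. exp (-(1/2) * quad_form P u) \<partial>lborel) = 0"
    then have "AE u in (lborel :: (real^'n) measure). False"
      using integral_nonneg_eq_0_iff_AE[OF integrable_exp_quad_form[OF assms]] by simp
    then have "ae_filter (lborel :: (real^'n) measure) = bot" by (simp add: trivial_limit_def)
    then show False by (simp add: ae_filter_eq_bot_iff)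
  qed
  then show ?thesis by (simp add: order_less_le)
qed

lemma gauss_normalizer_pos:
  fixes S :: "real^'n^'n"
  assumes "spd S"
  shows "sqrt ((2 * pi) ^ CARD('n) * det S) > 0"
  using spd_det_pos[OF assms] by simp

lemma integral_gauss_mult_gauss:
  fixes Sq St :: "real^'n^'n" and \<mu> :: "real^'n"
  assumes Sq: "spd Sq" and St: "spd St"
  obtains K where "K > 0"
    and "\<And>y. (\<integral>s. gauss \<mu> Sq s * gauss y St s \<partial>lborel) =
               K * exp (-(1/2) * quad_form (matrix_inv (Sq + St)) (y - \<mu>))"
proof -
  define Q where "Q = matrix_inv Sq"
  define T where "T = matrix_inv St"
  define P where "P = Q + T"
  define M where "M = matrix_inv (Sq + St)"
  have spdP: "spd P" unfolding P_def Q_def T_def by (intro spd_add spd_matrix_inv Sq St)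
  have M_eq: "M = T - T ** matrix_inv P ** T"
    unfolding M_def P_def Q_def T_def
    using spdP by (intro matrix_inv_add spd_invertible Sq St) (simp add: P_def Q_def T_def)
  have symQ: "transpose Q = Q" and symT: "transpose T = T"
    using Sq St by (simp_all add: Q_def T_def spd_symmetric spd_matrix_inv)
  have invP: "invertible P" using spdP by (rule spd_invertible)
  define kq where "kq = sqrt ((2 * pi) ^ CARD('n) * det Sq)"
  define kt where "kt = sqrt ((2 * pi) ^ CARD('n) * det St)"
  define J where "J = (\<integral>u. exp (-(1/2) * quad_form P u) \<partial>lborel)"
  have "(\<integral>s. gauss \<mu> Sq s * gauss y St s \<partial>lborel) =
        J / (kq * kt) * exp (-(1/2) * quad_form M (y - \<mu>))" for y
  proof -
    define m where "m = \<mu> + matrix_inv P *v (T *v (y - \<mu>))"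
    have square: "quad_form Q (s - \<mu>) + quad_form T (s - y) =
                  quad_form P (s - m) + quad_form M (y - \<mu>)" for s
    proof -
      have "(s - \<mu>) - (y - \<mu>) = s - y" "(s - \<mu>) - matrix_inv P *v (T *v (y - \<mu>)) = s - m"
        by (simp_all add: m_def)
      then show ?thesis
        using quad_form_complete_square[OF symQ symT invP[unfolded P_def], of "s - \<mu>" "y - \<mu>"]
        by (simp only: P_def[symmetric] M_eq[symmetric])
    qed
    have "gauss \<mu> Sq s * gauss y St s =
          exp (-(1/2) * quad_form M (y - \<mu>)) / (kq * kt) * exp (-(1/2) * quad_form P (s - m))" for s
      using square[of s] by (simp add: gauss_def Q_def T_def kq_def kt_def flip: exp_add)
    then have "(\<integral>s. gauss \<mu> Sq s * gauss y St s \<partial>lborel) =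
               exp (-(1/2) * quad_form M (y - \<mu>)) / (kq * kt) *
               (\<integral>s. exp (-(1/2) * quad_form P (s - m)) \<partial>lborel)"
      by simp
    also have "(\<integral>s. exp (-(1/2) * quad_form P (s - m)) \<partial>lborel) = J"
      unfolding J_def by (rule lborel_integral_translate[OF borel_measurable_exp_quad_form])
    finally show ?thesis by simp
  qed
  moreover have "J / (kq * kt) > 0"
    using integral_exp_quad_form_pos[OF spdP] gauss_normalizer_pos[OF Sq]
      gauss_normalizer_pos[OF St]
    by (simp add: J_def kq_def kt_def)
  ultimately show ?thesis using that unfolding M_def by blast
qed

theorem proposition2:
  fixes \<beta> t :: real
    and blk :: "'d::finite \<Rightarrow> 'k::finite"
    and p :: "'k \<Rightarrow> real^'d \<Rightarrow> real"
    and q :: "'k \<Rightarrow> real^'d \<Rightarrow> real^'d \<Rightarrow> real"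
    and Uenv :: "'e \<Rightarrow> real"
    and Uint :: "real^'d \<Rightarrow> 'e \<Rightarrow> real"
    and \<mu>c :: "'e \<Rightarrow> real^'d" and \<Sigma>c :: "'e \<Rightarrow> real^'d^'d"
    and A \<Sigma>t :: "real^'d^'d"
    and \<mu>q :: "'e \<Rightarrow> real \<Rightarrow> real^'d" and \<Sigma>q :: "'e \<Rightarrow> real \<Rightarrow> real^'d^'d"
    and senv :: 'e
  assumes beta_pos: "\<beta> > 0"
    and t_pos: "t > 0"
    and p_block: "\<And>i x y. same_block blk i x y \<Longrightarrow> p i x = p i y"
    and p_pos: "\<And>i x. p i x > 0"
    and q_block: "\<And>i s x s' x'. same_block blk i s s' \<Longrightarrow> same_block blk i x x'
                    \<Longrightarrow> q i s x = q i s' x'"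
    and Sc_spd: "\<And>e. spd (\<Sigma>c e)"
    and Uint_gauss: "\<And>e. \<exists>c>0. \<forall>ss. exp (- \<beta> * Uint ss e) = c * gauss (\<mu>c e) (\<Sigma>c e) ss"
    and St_spd: "spd \<Sigma>t"
    and A_inv: "invertible A"
    and kernels: "\<And>s x. (\<Prod>i\<in>UNIV. q i s x) = gauss (A *v x) \<Sigma>t s"
    and Sq_spd: "\<And>e. spd (\<Sigma>q e t)"
  defines "pi_t \<equiv> \<lambda>x e. LINT ss|lborel.
              exp (- \<beta> * Uenv e) * gauss (\<mu>q e t) (\<Sigma>q e t) ss * (\<Prod>i\<in>UNIV. p i x * q i ss x)"
    and "pi_0 \<equiv> \<lambda>x e. exp (- \<beta> * Uenv e) * (\<Prod>i\<in>UNIV. p i x) * exp (- \<beta> * Uint x e)"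
  shows "(\<exists>c>0. \<forall>x. pi_t x senv = c * pi_0 x senv) \<longleftrightarrow>
         (\<mu>q senv t = A *v \<mu>c senv \<and> \<Sigma>q senv t = A ** \<Sigma>c senv ** transpose A - \<Sigma>t)"
proof -
  note pi_t_def = assms(12) and pi_0_def = assms(13)
  define G where "G = \<Sigma>q senv t + \<Sigma>t"
  define E where "E = exp (- \<beta> * Uenv senv)"
  define P where "P = (\<lambda>x. \<Prod>i\<in>UNIV. p i x)"
  define kc where "kc = sqrt ((2 * pi) ^ CARD('d) * det (\<Sigma>c senv))"
  obtain K where K: "K > 0"
    and conv: "\<And>y. (\<integral>s. gauss (\<mu>q senv t) (\<Sigma>q senv t) s * gauss y \<Sigma>t s \<partial>lborel) =
                     K * exp (-(1/2) * quad_form (matrix_inv G) (y - \<mu>q senv t))"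
    using integral_gauss_mult_gauss[OF Sq_spd St_spd] unfolding G_def by blast
  obtain c where c: "c > 0"
    and Uint_eq: "\<And>x. exp (- \<beta> * Uint x senv) = c * gauss (\<mu>c senv) (\<Sigma>c senv) x"
    using Uint_gauss by blast
  have pi_t_eq: "pi_t x senv =
      (E * K) * P x * exp (-(1/2) * quad_form (matrix_inv G) (A *v x - \<mu>q senv t))" for x
  proof -
    have "pi_t x senv =
        (\<integral>s. E * P x * (gauss (\<mu>q senv t) (\<Sigma>q senv t) s * gauss (A *v x) \<Sigma>t s) \<partial>lborel)"
      unfolding pi_t_def by (simp add: prod.distrib kernels E_def P_def mult_ac)
    then show ?thesis by (simp add: conv)
  qed
  have pi_0_eq: "pi_0 x senv =
      (E * c / kc) * P x * exp (-(1/2) * quad_form (matrix_inv (\<Sigma>c senv)) (x - \<mu>c senv))" for x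
    unfolding pi_0_def Uint_eq gauss_def by (simp add: E_def P_def kc_def)
  have "E > 0" "kc > 0" "\<And>x. P x > 0"
    using gauss_normalizer_pos[OF Sc_spd] p_pos by (simp_all add: E_def kc_def P_def prod_pos)
  then have "(\<exists>c>0. \<forall>x. pi_t x senv = c * pi_0 x senv) \<longleftrightarrow>
      (\<exists>k. \<forall>x. quad_form (matrix_inv G) (A *v x - \<mu>q senv t) =
                quad_form (matrix_inv (\<Sigma>c senv)) (x - \<mu>c senv) + k)"
    unfolding pi_t_eq pi_0_eq using K c by (intro proportional_exp_iff mult_pos_pos divide_pos_pos)
  also have "\<dots> \<longleftrightarrow> \<mu>q senv t = A *v \<mu>c senv \<and> G = A ** \<Sigma>c senv ** transpose A"
    using spd_add[OF Sq_spd St_spd] Sc_spd unfolding G_def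
    by (intro quad_form_affine_eq_iff A_inv spd_symmetric spd_invertible)
  finally show ?thesis by (auto simp: G_def eq_diff_eq)
qed

end
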